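(* Let $\Gamma=(V,E)$ be a directed graph and $A(\Gamma)$ its associated algebra. Let $e_1,e_2\in E$ be edges with a common tail and $f_1,f_2\in E$ edges with a common head such that $h(e_i)=t(f_i)$ for $i=1,2$. Then in $A(\Gamma)$, for $\{i,j\}=\{1,2\}$, $$e_i(f_i-f_j)=(f_i-f_j)f_j,\qquad e_i(e_i-e_j)=(e_i-e_j)f_j.$$
   Context: Each edge $e$ has tail $t(e)$ and head $h(e)$; a directed path is $e_1,\dots,e_k$ with $t(e_{i+1})=h(e_i)$. For a field $k$, $A(\Gamma)$ is the quotient of the free associative $k$-algebra on the set $E$ by the relations that for any two directed paths $(e_1,\dots,e_k)$ and $(e'_1,\dots,e'_l)$ with the same origin and the same terminus, $(t-e_1)\cdots(t-e_k)=(t-e'_1)\cdots(t-e'_l)$ coefficientwise in the central variable $t$. *)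

theory Defs
  imports Main "HOL-Library.Poly_Mapping"
begin

text \<open>Words over the alphabet 'e form the free monoid; we make it an instance of
  monoid_add (zero = empty word, plus = concatenation; NOT commutative).
  The free associative k-algebra on 'e is then the monoid algebra
  the poly_mapping type from words to k, whose multiplication in Poly_Mapping is convolution.\<close>

datatype 'e word = Word "'e list"

fun word_list :: "'e word \<Rightarrow> 'e list" where
  "word_list (Word xs) = xs"

instantiation word :: (type) monoid_add
begin
definition zero_word :: "'e word" where "zero_word = Word []"
definition plus_word :: "'e word \<Rightarrow> 'e word \<Rightarrow> 'e word" where
  "plus_word u v = Word (word_list u @ word_list v)"
instance
proof
  fix a b c :: "'e word"
  show "a + b + c = a + (b + c)"
    by (cases a; cases b; cases c) (simp add: plus_word_def)
  show "0 + a = a" by (cases a) (simp add: plus_word_def zero_word_def)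
  show "a + 0 = a" by (cases a) (simp add: plus_word_def zero_word_def)
qed
end

type_synonym ('e, 'k) free_alg = "'e word \<Rightarrow>\<^sub>0 'k"

definition gen :: "'e \<Rightarrow> ('e, 'k::field) free_alg" where
  "gen e = Poly_Mapping.single (Word [e]) 1"

definition dpath :: "('e \<Rightarrow> 'v) \<Rightarrow> ('e \<Rightarrow> 'v) \<Rightarrow> 'e list \<Rightarrow> bool" where
  "dpath tail head es \<longleftrightarrow> es \<noteq> [] \<and>
     (\<forall>i. Suc i < length es \<longrightarrow> tail (es ! Suc i) = head (es ! i))"

definition origin :: "('e \<Rightarrow> 'v) \<Rightarrow> 'e list \<Rightarrow> 'v" where
  "origin tail es = tail (hd es)"

definition terminus :: "('e \<Rightarrow> 'v) \<Rightarrow> 'e list \<Rightarrow> 'v" where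
  "terminus h es = h (last es)"

text \<open>Coefficients of the polynomial (t - e_1)(t - e_2)...(t - e_k) in a central
  variable t with coefficients in the free algebra: pcoeff es r is the coefficient
  of t^r.  Since (t - e) P = t P - e P, the coefficient of t^r is P_{r-1} - e P_r.\<close>

fun pcoeff :: "'e list \<Rightarrow> nat \<Rightarrow> ('e, 'k::field) free_alg" where
  "pcoeff [] r = (if r = 0 then 1 else 0)"
| "pcoeff (e # es) r = (if r = 0 then 0 else pcoeff es (r - 1)) - gen e * pcoeff es r"

definition relators :: "('e \<Rightarrow> 'v) \<Rightarrow> ('e \<Rightarrow> 'v) \<Rightarrow> ('e, 'k::field) free_alg set" where
  "relators t h = {pcoeff p r - pcoeff q r | p q r.
      dpath t h p \<and> dpath t h q \<and> origin t p = origin t q \<and>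
      terminus h p = terminus h q}"

inductive_set two_sided_ideal :: "'a::ring_1 set \<Rightarrow> 'a set" for S where
  gen_in: "x \<in> S \<Longrightarrow> x \<in> two_sided_ideal S"
| zero_in: "0 \<in> two_sided_ideal S"
| add_in: "x \<in> two_sided_ideal S \<Longrightarrow> y \<in> two_sided_ideal S \<Longrightarrow> x + y \<in> two_sided_ideal S"
| mult_in: "x \<in> two_sided_ideal S \<Longrightarrow> a * x * b \<in> two_sided_ideal S"

definition eq_in_A :: "('e \<Rightarrow> 'v) \<Rightarrow> ('e \<Rightarrow> 'v) \<Rightarrow> ('e, 'k::field) free_alg \<Rightarrow> ('e, 'k) free_alg \<Rightarrow> bool" where
  "eq_in_A t h x y \<longleftrightarrow> x - y \<in> two_sided_ideal (relators t h)"

end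

theory Submission
  imports Defs
begin

text \<open>The paths \<open>e\<^sub>1 f\<^sub>1\<close> and \<open>e\<^sub>2 f\<^sub>2\<close> share origin and terminus, so comparing the coefficients
  of \<open>t\<close> and \<open>1\<close> in \<open>(t - e\<^sub>1)(t - f\<^sub>1) = (t - e\<^sub>2)(t - f\<^sub>2)\<close> gives \<open>e\<^sub>1 + f\<^sub>1 = e\<^sub>2 + f\<^sub>2\<close> and
  \<open>e\<^sub>1 f\<^sub>1 = e\<^sub>2 f\<^sub>2\<close> in \<open>A(\<Gamma>)\<close>. Both claimed identities follow from these two relations in any
  ring: modulo the linear one, the difference of the two sides of each is, up to sign, \<open>e\<^sub>i f\<^sub>i - e\<^sub>j f\<^sub>j\<close>.\<close>

lemma two_sided_ideal_mult_left: "x \<in> two_sided_ideal S \<Longrightarrow> c * x \<in> two_sided_ideal S"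
  using two_sided_ideal.mult_in[of x S c 1] by simp

lemma two_sided_ideal_mult_right: "x \<in> two_sided_ideal S \<Longrightarrow> x * c \<in> two_sided_ideal S"
  using two_sided_ideal.mult_in[of x S 1 c] by simp

lemma two_sided_ideal_uminus: "x \<in> two_sided_ideal S \<Longrightarrow> - x \<in> two_sided_ideal S"
  using two_sided_ideal_mult_left[of x S "-1"] by simp

lemma two_sided_ideal_diff:
  "x \<in> two_sided_ideal S \<Longrightarrow> y \<in> two_sided_ideal S \<Longrightarrow> x - y \<in> two_sided_ideal S"
  unfolding diff_conv_add_uminus by (intro two_sided_ideal.add_in two_sided_ideal_uminus)

lemma commutation_relations_mod_two_sided_ideal:
  fixes a b c d :: "'a::ring_1"
  assumes sum: "a + b - (c + d) \<in> two_sided_ideal S"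
    and prod: "a * b - c * d \<in> two_sided_ideal S"
  shows "a * (b - d) - (b - d) * d \<in> two_sided_ideal S"
    and "a * (a - c) - (a - c) * d \<in> two_sided_ideal S"
proof -
  have "a * (b - d) - (b - d) * d = (a * b - c * d) - (a + b - (c + d)) * d"
    by (simp add: algebra_simps)
  then show "a * (b - d) - (b - d) * d \<in> two_sided_ideal S"
    by (simp add: two_sided_ideal_diff two_sided_ideal_mult_right sum prod)
  have "a * (a - c) - (a - c) * d = a * (a + b - (c + d)) - (a * b - c * d)"
    by (simp add: algebra_simps)
  then show "a * (a - c) - (a - c) * d \<in> two_sided_ideal S"
    by (simp add: two_sided_ideal_diff two_sided_ideal_mult_left sum prod)
qed

lemma pcoeff_two_edges:
  "pcoeff [a, b] 0 = (gen a * gen b :: ('e, 'k::field) free_alg)"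
  "pcoeff [a, b] 1 = (- (gen a + gen b) :: ('e, 'k::field) free_alg)"
  by simp_all

lemma two_edge_paths_relations:
  fixes a b c d :: 'e
  assumes "t a = t c" and "h b = h d" and "h a = t b" and "h c = t d"
  shows "(gen a + gen b - (gen c + gen d) :: ('e, 'k::field) free_alg)
           \<in> two_sided_ideal (relators t h)"
    and "(gen a * gen b - gen c * gen d :: ('e, 'k::field) free_alg)
           \<in> two_sided_ideal (relators t h)"
proof -
  have "pcoeff [a, b] r - pcoeff [c, d] r \<in> relators t h" for r
  proof -
    have "dpath t h [a, b]" "dpath t h [c, d]"
      using assms(3,4) by (auto simp: dpath_def less_Suc_eq)
    moreover have "origin t [a, b] = origin t [c, d]" "terminus h [a, b] = terminus h [c, d]"
      using assms(1,2) by (simp_all add: origin_def terminus_def)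
    ultimately show ?thesis
      unfolding relators_def by blast
  qed
  then have rel: "pcoeff [a, b] r - pcoeff [c, d] r \<in> two_sided_ideal (relators t h)" for r
    by (rule two_sided_ideal.gen_in)
  have sum_eq: "(gen a + gen b - (gen c + gen d) :: ('e, 'k) free_alg)
          = - (pcoeff [a, b] 1 - pcoeff [c, d] 1)"
    by (simp only: pcoeff_two_edges) (simp add: algebra_simps)
  show "(gen a + gen b - (gen c + gen d) :: ('e, 'k) free_alg)
          \<in> two_sided_ideal (relators t h)"
    unfolding sum_eq by (rule two_sided_ideal_uminus[OF rel])
  show "(gen a * gen b - gen c * gen d :: ('e, 'k) free_alg)
          \<in> two_sided_ideal (relators t h)"
    using rel[of 0] by (simp only: pcoeff_two_edges)
qed

theorem proposition3p3p1:
  fixes t :: "'e \<Rightarrow> 'v" and h :: "'e \<Rightarrow> 'v"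
    and e1 e2 f1 f2 :: 'e and i j :: nat
  assumes "t e1 = t e2"
    and "h f1 = h f2"
    and "h e1 = t f1" and "h e2 = t f2"
    and "{i, j} = {1, 2}"
  defines "e \<equiv> (\<lambda>n. if n = (1::nat) then e1 else e2)"
    and "f \<equiv> (\<lambda>n. if n = (1::nat) then f1 else f2)"
  shows "eq_in_A t h (gen (e i) * (gen (f i) - gen (f j)) :: ('e, 'k::field) free_alg)
                      ((gen (f i) - gen (f j)) * gen (f j))
       \<and> eq_in_A t h (gen (e i) * (gen (e i) - gen (e j)) :: ('e, 'k::field) free_alg)
                      ((gen (e i) - gen (e j)) * gen (f j))"
proof -
  have "i = 1 \<and> j = 2 \<or> i = 2 \<and> j = 1"
    using assms(5) by (metis doubleton_eq_iff)
  then have "t (e i) = t (e j)" "h (f i) = h (f j)" "h (e i) = t (f i)" "h (e j) = t (f j)"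
    using assms(1-4) by (auto simp: e_def f_def)
  then have "(gen (e i) + gen (f i) - (gen (e j) + gen (f j)) :: ('e, 'k) free_alg)
               \<in> two_sided_ideal (relators t h)"
    and "(gen (e i) * gen (f i) - gen (e j) * gen (f j) :: ('e, 'k) free_alg)
               \<in> two_sided_ideal (relators t h)"
    by (rule two_edge_paths_relations)+
  then show ?thesis
    unfolding eq_in_A_def by (intro conjI commutation_relations_mod_two_sided_ideal)
qed

end
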